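(* For every $A\subseteq\mathbb{N}$, $$\underline{\underline{d}}(A)\le\underline{d}_\infty(A)\le\overline{d}_\infty(A)\le\overline{\overline{d}}(A).$$
   Context: $\mathbb{N}=\{1,2,3,\dots\}$. For $A\subseteq\mathbb{N}$ let $A(n)=|A\cap[1,n]|$; $\mathcal{D}$ is the collection of sets for which $d(A)=\lim_{n\to\infty}A(n)/n$ exists; $\underline{\underline{d}}(A)=\sup\{d(B);\ B\subseteq A,\ B\in\mathcal{D}\}$ and $\overline{\overline{d}}(A)=\inf\{d(C);\ C\supseteq A,\ C\in\mathcal{D}\}$. For $\alpha\ge-1$ put $A_\alpha(n)=\sum_{k=1}^n\chi_A(k)k^\alpha$, $\mathbb{N}_\alpha(n)=\sum_{k=1}^nk^\alpha$, $\underline{d}_\alpha(A)=\liminf_{n\to\infty}\frac{A_\alpha(n)}{\mathbb{N}_\alpha(n)}$, $\overline{d}_\alpha(A)=\limsup_{n\to\infty}\frac{A_\alpha(n)}{\mathbb{N}_\alpha(n)}$, $\underline{d}_\infty(A)=\inf_{\alpha\ge-1}\underline{d}_\alpha(A)$ and $\overline{d}_\infty(A)=\sup_{\alpha\ge-1}\overline{d}_\alpha(A)$ (these equal $\lim_{\alpha\to\infty}\underline{d}_\alpha(A)$ and $\lim_{\alpha\to\infty}\overline{d}_\alpha(A)$ respectively). *)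

theory Defs
  imports "HOL-Analysis.Analysis"
begin

definition cnt :: "nat set \<Rightarrow> nat \<Rightarrow> nat" where
  "cnt A n = card (A \<inter> {1..n})"

definition has_density :: "nat set \<Rightarrow> real \<Rightarrow> bool" where
  "has_density A d \<longleftrightarrow> (\<lambda>n. real (cnt A n) / real n) \<longlonglongrightarrow> d"

definition Dens :: "nat set set" where
  "Dens = {A. \<exists>d. has_density A d}"

definition dens :: "nat set \<Rightarrow> real" where
  "dens A = lim (\<lambda>n. real (cnt A n) / real n)"

definition lower_dd :: "nat set \<Rightarrow> real" where
  "lower_dd A = Sup {dens B | B. B \<subseteq> A \<and> B \<in> Dens}"

definition upper_dd :: "nat set \<Rightarrow> real" where
  "upper_dd A = Inf {dens C | C. A \<subseteq> C \<and> C \<in> Dens}"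

definition A_alpha :: "real \<Rightarrow> nat set \<Rightarrow> nat \<Rightarrow> real" where
  "A_alpha \<alpha> A n = (\<Sum>k\<in>A \<inter> {1..n}. real k powr \<alpha>)"

definition N_alpha :: "real \<Rightarrow> nat \<Rightarrow> real" where
  "N_alpha \<alpha> n = (\<Sum>k=1..n. real k powr \<alpha>)"

definition lower_d_alpha :: "real \<Rightarrow> nat set \<Rightarrow> ereal" where
  "lower_d_alpha \<alpha> A = liminf (\<lambda>n. ereal (A_alpha \<alpha> A n / N_alpha \<alpha> n))"

definition upper_d_alpha :: "real \<Rightarrow> nat set \<Rightarrow> ereal" where
  "upper_d_alpha \<alpha> A = limsup (\<lambda>n. ereal (A_alpha \<alpha> A n / N_alpha \<alpha> n))"

definition lower_d_inf :: "nat set \<Rightarrow> ereal" where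
  "lower_d_inf A = (INF \<alpha>\<in>{-1..}. lower_d_alpha \<alpha> A)"

definition upper_d_inf :: "nat set \<Rightarrow> ereal" where
  "upper_d_inf A = (SUP \<alpha>\<in>{-1..}. upper_d_alpha \<alpha> A)"

end

theory Submission imports Defs begin

text \<open>Let \<open>e(k) = A(k) - d k\<close> be the error of a set of density \<open>d\<close>. Summation by parts
  writes \<open>A\<^sub>\<alpha>(n) - d N\<^sub>\<alpha>(n)\<close> as \<open>e(n) n\<^sup>\<alpha>\<close> plus a sum of \<open>e(k)\<close> against the increments of
  \<open>k\<^sup>\<alpha>\<close>. Since \<open>k\<^sup>\<alpha>\<close> is monotone and \<open>n\<cdot>n\<^sup>\<alpha> = O(N\<^sub>\<alpha>(n))\<close> for \<open>\<alpha> \<ge> -1\<close>, the bound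
  \<open>e(k) = o(k)\<close> makes this \<open>o(N\<^sub>\<alpha>(n))\<close>, so every set of density \<open>d\<close> has \<open>\<alpha>\<close>-density \<open>d\<close>.
  Inner and outer sets of \<open>A\<close> with a density then bound the weighted lower and upper
  densities of \<open>A\<close> for every \<open>\<alpha>\<close>.\<close>

lemma sum_diff_mult_by_parts:
  fixes f w :: "nat \<Rightarrow> 'a::comm_ring"
  shows "(\<Sum>k<n. (f (Suc k) - f k) * w (Suc k))
           = f n * w n - f 0 * w 0 + (\<Sum>k<n. f k * (w k - w (Suc k)))"
  by (induction n) (simp_all add: algebra_simps)

lemma abs_by_parts_error_le:
  fixes e w :: "nat \<Rightarrow> real"
  assumes w: "\<And>k. w k \<ge> 0" and e: "\<And>k. k \<ge> K \<Longrightarrow> \<bar>e k\<bar> \<le> \<delta> * real k"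
    and "\<delta> \<ge> 0" "K \<le> n"
  shows "\<bar>e n * w n + (\<Sum>k<n. e k * (w k - w (Suc k)))\<bar>
           \<le> \<delta> * (real n * w n + (\<Sum>k<n. real k * \<bar>w k - w (Suc k)\<bar>))
             + (\<Sum>k<K. \<bar>e k\<bar> * \<bar>w k - w (Suc k)\<bar>)"
proof -
  let ?v = "\<lambda>k. \<bar>w k - w (Suc k)\<bar>"
  have "\<bar>\<Sum>k<n. e k * (w k - w (Suc k))\<bar> \<le> (\<Sum>k<n. \<bar>e k\<bar> * ?v k)"
    by (rule order_trans[OF sum_abs]) (simp add: abs_mult)
  also have "\<dots> \<le> (\<Sum>k<n. \<delta> * (real k * ?v k) + (if k < K then \<bar>e k\<bar> * ?v k else 0))"
  proof (rule sum_mono)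
    fix k
    show "\<bar>e k\<bar> * ?v k \<le> \<delta> * (real k * ?v k) + (if k < K then \<bar>e k\<bar> * ?v k else 0)"
      using e[of k] mult_right_mono[OF e[of k], of "?v k"] \<open>\<delta> \<ge> 0\<close>
      by (cases "k < K") (auto simp: mult.assoc)
  qed
  also have "\<dots> = \<delta> * (\<Sum>k<n. real k * ?v k) + (\<Sum>k<K. \<bar>e k\<bar> * ?v k)"
  proof -
    have "{..<n} \<inter> {k. k < K} = {..<K}" using \<open>K \<le> n\<close> by auto
    then show ?thesis by (simp add: sum.distrib sum_distrib_left sum.If_cases)
  qed
  finally have "\<bar>\<Sum>k<n. e k * (w k - w (Suc k))\<bar>
      \<le> \<delta> * (\<Sum>k<n. real k * ?v k) + (\<Sum>k<K. \<bar>e k\<bar> * ?v k)" .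
  moreover have "\<bar>e n * w n\<bar> \<le> \<delta> * (real n * w n)"
    using mult_right_mono[OF e[OF \<open>K \<le> n\<close>] w[of n]] w[of n] by (simp add: abs_mult mult.assoc)
  ultimately show ?thesis by (simp add: algebra_simps)
qed

lemma by_parts_error_negligible:
  fixes e w N :: "nat \<Rightarrow> real"
  assumes e: "(\<lambda>k. e k / real k) \<longlonglongrightarrow> 0" and w: "\<And>k. w k \<ge> 0"
    and var: "\<And>n. n \<ge> 1 \<Longrightarrow> real n * w n + (\<Sum>k<n. real k * \<bar>w k - w (Suc k)\<bar>) \<le> C * N n"
    and N: "filterlim N at_top sequentially"
  shows "(\<lambda>n. (e n * w n + (\<Sum>k<n. e k * (w k - w (Suc k)))) / N n) \<longlonglongrightarrow> 0"
proof (rule tendstoI)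
  fix \<epsilon> :: real assume "\<epsilon> > 0"
  define \<delta> where "\<delta> = \<epsilon> / (2 * (\<bar>C\<bar> + 1))"
  have "\<delta> > 0" using \<open>\<epsilon> > 0\<close> by (simp add: \<delta>_def add_pos_nonneg)
  obtain K where K: "\<And>k. k \<ge> K \<Longrightarrow> \<bar>e k / real k\<bar> < \<delta>"
    using tendstoD[OF e \<open>\<delta> > 0\<close>] by (auto simp: eventually_sequentially)
  have eK: "\<bar>e k\<bar> \<le> \<delta> * real k" if "k \<ge> max K 1" for k
    using K[of k] that by (simp add: abs_div pos_divide_less_eq less_imp_le)
  define M where "M = (\<Sum>k<max K 1. \<bar>e k\<bar> * \<bar>w k - w (Suc k)\<bar>)"
  have "(\<lambda>n. M / N n) \<longlonglongrightarrow> 0"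
    by (rule tendsto_divide_0[OF tendsto_const filterlim_at_top_imp_at_infinity[OF N]])
  then have "eventually (\<lambda>n. M / N n < \<epsilon> / 2) sequentially"
    using \<open>\<epsilon> > 0\<close> by (intro order_tendstoD(2)) auto
  moreover have "eventually (\<lambda>n. N n > 0) sequentially"
    using N by (simp add: filterlim_at_top_dense)
  moreover have "eventually (\<lambda>n. n \<ge> max K 1) sequentially" by (rule eventually_ge_at_top)
  ultimately show "eventually (\<lambda>n. dist ((e n * w n + (\<Sum>k<n. e k * (w k - w (Suc k)))) / N n) 0 < \<epsilon>) sequentially"
  proof eventually_elim
    case (elim n)
    let ?T = "e n * w n + (\<Sum>k<n. e k * (w k - w (Suc k)))"
    have "\<bar>?T\<bar> \<le> \<delta> * (C * N n) + M"
    proof -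
      have "\<bar>?T\<bar> \<le> \<delta> * (real n * w n + (\<Sum>k<n. real k * \<bar>w k - w (Suc k)\<bar>)) + M"
        unfolding M_def using elim \<open>\<delta> > 0\<close> by (intro abs_by_parts_error_le[OF w eK]) auto
      also have "\<dots> \<le> \<delta> * (C * N n) + M"
        using var[of n] elim \<open>\<delta> > 0\<close> by (intro add_right_mono mult_left_mono) auto
      finally show ?thesis .
    qed
    also have "\<delta> * (C * N n) \<le> \<delta> * ((\<bar>C\<bar> + 1) * N n)"
      using elim \<open>\<delta> > 0\<close> by (intro mult_left_mono mult_right_mono) auto
    also have "\<dots> = \<epsilon> / 2 * N n" by (simp add: \<delta>_def field_simps add_pos_nonneg)
    finally have "\<bar>?T\<bar> / N n \<le> \<epsilon> / 2 + M / N n"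
      using elim by (simp add: field_simps)
    moreover have "dist (?T / N n) 0 = \<bar>?T\<bar> / N n" using elim by (simp add: abs_div)
    ultimately show ?case using elim(1) by linarith
  qed
qed

lemma N_alpha_eq_sum_lessThan: "N_alpha \<alpha> n = (\<Sum>k<n. real (Suc k) powr \<alpha>)"
  unfolding N_alpha_def using sum.atLeast1_atMost_eq[of "\<lambda>k. real k powr \<alpha>" n] by simp

lemma A_alpha_eq_sum_lessThan:
  "A_alpha \<alpha> B n = (\<Sum>k<n. of_bool (Suc k \<in> B) * real (Suc k) powr \<alpha>)"
proof -
  have "A_alpha \<alpha> B n = (\<Sum>k\<in>{1..n} \<inter> B. real k powr \<alpha>)"
    by (simp add: A_alpha_def Int_commute)
  also have "\<dots> = (\<Sum>k=1..n. if k \<in> B then real k powr \<alpha> else 0)"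
    using sum.inter_restrict[of "{1..n}" "\<lambda>k. real k powr \<alpha>" B] by simp
  also have "\<dots> = (\<Sum>k=1..n. of_bool (k \<in> B) * real k powr \<alpha>)"
    by (intro sum.cong) auto
  also have "\<dots> = (\<Sum>k<n. of_bool (Suc k \<in> B) * real (Suc k) powr \<alpha>)"
    using sum.atLeast1_atMost_eq[of "\<lambda>k. of_bool (k \<in> B) * real k powr \<alpha>"] by simp
  finally show ?thesis .
qed

lemma cnt_Suc: "cnt B (Suc k) = cnt B k + of_bool (Suc k \<in> B)"
proof -
  have "B \<inter> {1..Suc k} = (if Suc k \<in> B then insert (Suc k) (B \<inter> {1..k}) else B \<inter> {1..k})"
    by (auto simp: le_Suc_eq)
  then show ?thesis unfolding cnt_def by auto
qed

lemma N_alpha_nonneg: "N_alpha \<alpha> n \<ge> 0"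
  unfolding N_alpha_def by (intro sum_nonneg) auto

lemma N_alpha_ge_harm:
  assumes "\<alpha> \<ge> -1"
  shows "harm n \<le> N_alpha \<alpha> n"
  unfolding N_alpha_eq_sum_lessThan harm_altdef
proof (rule sum_mono)
  fix k
  have "inverse (real (Suc k)) = real (Suc k) powr (-1)" by (simp add: powr_minus)
  also have "\<dots> \<le> real (Suc k) powr \<alpha>" using assms by (intro powr_mono) auto
  finally show "inverse (real (Suc k)) \<le> real (Suc k) powr \<alpha>" .
qed

lemma N_alpha_at_top:
  assumes "\<alpha> \<ge> -1"
  shows "filterlim (N_alpha \<alpha>) at_top sequentially"
  using filterlim_at_top_mono[OF harm_at_top] N_alpha_ge_harm[OF assms] by auto

lemma N_alpha_by_parts:
  "N_alpha \<alpha> n = real n * real n powr \<alpha> + (\<Sum>k<n. real k * (real k powr \<alpha> - real (Suc k) powr \<alpha>))"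
  using sum_diff_mult_by_parts[of real "\<lambda>k. real k powr \<alpha>" n]
  unfolding N_alpha_eq_sum_lessThan by simp

text \<open>The factor \<open>k\<close> hides the one non-monotone step \<open>0 powr \<alpha> = 0 < 1 = 1 powr \<alpha>\<close> for \<open>\<alpha> < 0\<close>.\<close>

lemma sum_variation_powr_le:
  "(\<Sum>k<n. real k * \<bar>real k powr \<alpha> - real (Suc k) powr \<alpha>\<bar>) \<le> N_alpha \<alpha> n + real n * real n powr \<alpha>"
proof (cases "\<alpha> \<ge> 0")
  case True
  have "real k * \<bar>real k powr \<alpha> - real (Suc k) powr \<alpha>\<bar>
          = - (real k * (real k powr \<alpha> - real (Suc k) powr \<alpha>))" for k
    using powr_mono2[OF True, of "real k" "real (Suc k)"] by (simp add: algebra_simps)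
  then have "(\<Sum>k<n. real k * \<bar>real k powr \<alpha> - real (Suc k) powr \<alpha>\<bar>) = real n * real n powr \<alpha> - N_alpha \<alpha> n"
    by (simp add: N_alpha_by_parts sum_negf)
  then show ?thesis using N_alpha_nonneg[of \<alpha> n] by simp
next
  case False
  have "real k * \<bar>real k powr \<alpha> - real (Suc k) powr \<alpha>\<bar>
          = real k * (real k powr \<alpha> - real (Suc k) powr \<alpha>)" for k
    using False powr_mono2'[of \<alpha> "real k" "real (Suc k)"] by (cases "k = 0") auto
  from sum.cong[OF refl this] have "(\<Sum>k<n. real k * \<bar>real k powr \<alpha> - real (Suc k) powr \<alpha>\<bar>) = N_alpha \<alpha> n - real n * real n powr \<alpha>"
    by (simp add: N_alpha_by_parts)
  then show ?thesis by simp
qed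

lemma mult_powr_le_N_alpha_nonpos:
  assumes "\<alpha> \<le> 0"
  shows "real n * real n powr \<alpha> \<le> N_alpha \<alpha> n"
proof -
  have "real (card {..<n}) * real n powr \<alpha> \<le> (\<Sum>k<n. real (Suc k) powr \<alpha>)"
    by (rule sum_bounded_below) (use assms in \<open>auto intro!: powr_mono2'\<close>)
  then show ?thesis by (simp add: N_alpha_eq_sum_lessThan)
qed

text \<open>For \<open>\<alpha> \<ge> 0\<close> the upper half of the terms of \<open>N\<^sub>\<alpha>(n)\<close> are each at least \<open>(n/2)\<^sup>\<alpha>\<close>.\<close>

lemma mult_powr_le_N_alpha_nonneg:
  assumes "\<alpha> \<ge> 0"
  shows "real n * real n powr \<alpha> \<le> 2 powr (\<alpha> + 1) * N_alpha \<alpha> n"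
proof (cases "n = 0")
  case False
  define m where "m = n div 2"
  have "real (card {n-m..n}) * (real n / 2) powr \<alpha> \<le> (\<Sum>k\<in>{n-m..n}. real k powr \<alpha>)"
  proof (rule sum_bounded_below)
    fix k assume "k \<in> {n-m..n}"
    then have "real n / 2 \<le> real k" by (auto simp: m_def)
    then show "(real n / 2) powr \<alpha> \<le> real k powr \<alpha>" using assms by (intro powr_mono2) auto
  qed
  also have "\<dots> \<le> N_alpha \<alpha> n"
    unfolding N_alpha_def using False by (intro sum_mono2) (auto simp: m_def)
  finally have "real (m + 1) * (real n / 2) powr \<alpha> \<le> N_alpha \<alpha> n" by (simp add: m_def)
  moreover have "real n / 2 \<le> real (m + 1)" unfolding m_def by linarith
  ultimately have "(real n / 2) * (real n / 2) powr \<alpha> \<le> N_alpha \<alpha> n"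
    by (meson mult_right_mono order_trans powr_ge_zero)
  then have "2 powr (\<alpha> + 1) * ((real n / 2) * (real n / 2) powr \<alpha>) \<le> 2 powr (\<alpha> + 1) * N_alpha \<alpha> n"
    by (rule mult_left_mono) simp
  then show ?thesis by (simp add: powr_add powr_divide)
qed (simp add: N_alpha_def)

lemma mult_powr_le_N_alpha:
  assumes "\<alpha> \<ge> -1"
  shows "real n * real n powr \<alpha> \<le> 2 powr (\<alpha> + 1) * N_alpha \<alpha> n"
proof (cases "\<alpha> \<ge> 0")
  case False
  have "1 \<le> (2::real) powr (\<alpha> + 1)" using assms by (simp add: ge_one_powr_ge_zero)
  then have "N_alpha \<alpha> n \<le> 2 powr (\<alpha> + 1) * N_alpha \<alpha> n"
    using N_alpha_nonneg[of \<alpha> n] mult_right_mono by fastforce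
  then show ?thesis using mult_powr_le_N_alpha_nonpos[of \<alpha> n] False by simp
qed (rule mult_powr_le_N_alpha_nonneg)

lemma has_density_imp_weighted_density:
  assumes hd: "has_density B d" and "\<alpha> \<ge> -1"
  shows "(\<lambda>n. A_alpha \<alpha> B n / N_alpha \<alpha> n) \<longlonglongrightarrow> d"
proof -
  define w where "w k = real k powr \<alpha>" for k
  define e where "e k = real (cnt B k) - d * real k" for k
  have by_parts: "A_alpha \<alpha> B n - d * N_alpha \<alpha> n = e n * w n + (\<Sum>k<n. e k * (w k - w (Suc k)))" for n
  proof -
    have "A_alpha \<alpha> B n - d * N_alpha \<alpha> n = (\<Sum>k<n. (e (Suc k) - e k) * w (Suc k))"
      unfolding A_alpha_eq_sum_lessThan N_alpha_eq_sum_lessThan sum_distrib_left sum_subtractf[symmetric]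
      by (intro sum.cong) (auto simp: e_def w_def cnt_Suc algebra_simps)
    then show ?thesis using sum_diff_mult_by_parts[of e w n] by (simp add: e_def cnt_def)
  qed
  have "(\<lambda>k. real (cnt B k) / real k - d) \<longlonglongrightarrow> 0"
    using tendsto_diff[OF hd[unfolded has_density_def] tendsto_const, of d] by simp
  then have "(\<lambda>k. e k / real k) \<longlonglongrightarrow> 0"
    by (rule Lim_transform_eventually)
       (use eventually_gt_at_top[of 0] in \<open>eventually_elim, simp add: e_def field_simps\<close>)
  moreover have "real n * w n + (\<Sum>k<n. real k * \<bar>w k - w (Suc k)\<bar>)
                   \<le> (2 * 2 powr (\<alpha> + 1) + 1) * N_alpha \<alpha> n" for n
    using sum_variation_powr_le[of \<alpha> n] mult_powr_le_N_alpha[OF \<open>\<alpha> \<ge> -1\<close>, of n]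
    unfolding w_def by (simp add: algebra_simps)
  ultimately have "(\<lambda>n. (A_alpha \<alpha> B n - d * N_alpha \<alpha> n) / N_alpha \<alpha> n) \<longlonglongrightarrow> 0"
    unfolding by_parts
    by (intro by_parts_error_negligible[OF _ _ _ N_alpha_at_top[OF \<open>\<alpha> \<ge> -1\<close>]]) (auto simp: w_def)
  then have "(\<lambda>n. d + (A_alpha \<alpha> B n - d * N_alpha \<alpha> n) / N_alpha \<alpha> n) \<longlonglongrightarrow> d"
    using tendsto_add[OF tendsto_const] by fastforce
  moreover have "eventually (\<lambda>n. N_alpha \<alpha> n > 0) sequentially"
    using N_alpha_at_top[OF \<open>\<alpha> \<ge> -1\<close>] by (simp add: filterlim_at_top_dense)
  ultimately show ?thesis
    by (elim Lim_transform_eventually eventually_mono) (simp add: field_simps)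
qed

lemma dens_eq: "has_density B d \<Longrightarrow> dens B = d"
  unfolding dens_def has_density_def by (rule limI)

lemma Dens_has_density: "B \<in> Dens \<Longrightarrow> has_density B (dens B)"
  unfolding Dens_def using dens_eq by auto

lemma dens_bounded:
  assumes "B \<in> Dens"
  shows "0 \<le> dens B \<and> dens B \<le> 1"
proof -
  have "real (cnt B n) / real n \<le> 1" for n
  proof -
    have "cnt B n \<le> card {1..n}" unfolding cnt_def by (rule card_mono) auto
    then show ?thesis by (cases "n = 0") (auto simp: divide_le_eq_1)
  qed
  then show ?thesis
    using Dens_has_density[OF assms] unfolding has_density_def
    by (auto intro: LIMSEQ_le_const LIMSEQ_le_const2)
qed

lemma empty_in_Dens: "{} \<in> Dens"
  unfolding Dens_def has_density_def cnt_def by auto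

lemma UNIV_in_Dens: "UNIV \<in> Dens"
proof -
  have "(\<lambda>n. real (cnt UNIV n) / real n) \<longlonglongrightarrow> 1"
    by (rule LIMSEQ_imp_Suc) (simp add: cnt_def)
  then show ?thesis
    unfolding Dens_def has_density_def by blast
qed

lemma ereal_lower_dd: "ereal (lower_dd A) = (SUP B\<in>{B. B \<subseteq> A \<and> B \<in> Dens}. ereal (dens B))"
proof -
  have "lower_dd A = (SUP B\<in>{B. B \<subseteq> A \<and> B \<in> Dens}. dens B)"
    unfolding lower_dd_def by (simp add: setcompr_eq_image)
  moreover have "\<bar>SUP B\<in>{B. B \<subseteq> A \<and> B \<in> Dens}. ereal (dens B)\<bar> \<noteq> \<infinity>"
    using empty_in_Dens dens_bounded by (intro ereal_SUP_not_infty[where l = 0 and u = 1]) auto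
  ultimately show ?thesis by (simp add: ereal_SUP)
qed

lemma ereal_upper_dd: "ereal (upper_dd A) = (INF C\<in>{C. A \<subseteq> C \<and> C \<in> Dens}. ereal (dens C))"
proof -
  have "upper_dd A = (INF C\<in>{C. A \<subseteq> C \<and> C \<in> Dens}. dens C)"
    unfolding upper_dd_def by (simp add: setcompr_eq_image)
  moreover have "\<bar>INF C\<in>{C. A \<subseteq> C \<and> C \<in> Dens}. ereal (dens C)\<bar> \<noteq> \<infinity>"
    using UNIV_in_Dens dens_bounded by (intro ereal_INF_not_infty[where l = 0 and u = 1]) auto
  ultimately show ?thesis by (simp add: ereal_INF)
qed

lemma A_alpha_mono: "B \<subseteq> C \<Longrightarrow> A_alpha \<alpha> B n \<le> A_alpha \<alpha> C n"
  unfolding A_alpha_def by (intro sum_mono2) auto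

lemma dens_le_lower_d_alpha:
  assumes "\<alpha> \<ge> -1" "B \<subseteq> A" "B \<in> Dens"
  shows "ereal (dens B) \<le> lower_d_alpha \<alpha> A"
proof -
  have "ereal (dens B) = liminf (\<lambda>n. ereal (A_alpha \<alpha> B n / N_alpha \<alpha> n))"
    using has_density_imp_weighted_density[OF Dens_has_density[OF \<open>B \<in> Dens\<close>] \<open>\<alpha> \<ge> -1\<close>]
    by (intro lim_imp_Liminf[symmetric] tendsto_ereal) auto
  also have "\<dots> \<le> lower_d_alpha \<alpha> A"
    unfolding lower_d_alpha_def using A_alpha_mono[OF \<open>B \<subseteq> A\<close>] N_alpha_nonneg
    by (intro Liminf_mono always_eventually) (simp add: divide_right_mono)
  finally show ?thesis .
qed

lemma upper_d_alpha_le_dens: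
  assumes "\<alpha> \<ge> -1" "A \<subseteq> C" "C \<in> Dens"
  shows "upper_d_alpha \<alpha> A \<le> ereal (dens C)"
proof -
  have "ereal (dens C) = limsup (\<lambda>n. ereal (A_alpha \<alpha> C n / N_alpha \<alpha> n))"
    using has_density_imp_weighted_density[OF Dens_has_density[OF \<open>C \<in> Dens\<close>] \<open>\<alpha> \<ge> -1\<close>]
    by (intro lim_imp_Limsup[symmetric] tendsto_ereal) auto
  moreover have "upper_d_alpha \<alpha> A \<le> limsup (\<lambda>n. ereal (A_alpha \<alpha> C n / N_alpha \<alpha> n))"
    unfolding upper_d_alpha_def using A_alpha_mono[OF \<open>A \<subseteq> C\<close>] N_alpha_nonneg
    by (intro Limsup_mono always_eventually) (simp add: divide_right_mono)
  ultimately show ?thesis by simp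
qed

theorem corollary4p5:
  fixes A :: "nat set"
  assumes "0 \<notin> A"
  shows "ereal (lower_dd A) \<le> lower_d_inf A
       \<and> lower_d_inf A \<le> upper_d_inf A
       \<and> upper_d_inf A \<le> ereal (upper_dd A)"
proof (intro conjI)
  show "ereal (lower_dd A) \<le> lower_d_inf A"
    unfolding ereal_lower_dd lower_d_inf_def
    by (intro INF_greatest SUP_least) (auto intro: dens_le_lower_d_alpha)
  have "lower_d_inf A \<le> lower_d_alpha (-1) A"
    unfolding lower_d_inf_def by (rule INF_lower) simp
  also have "\<dots> \<le> upper_d_alpha (-1) A"
    unfolding lower_d_alpha_def upper_d_alpha_def by (rule Liminf_le_Limsup) simp
  also have "\<dots> \<le> upper_d_inf A"
    unfolding upper_d_inf_def by (rule SUP_upper) simp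
  finally show "lower_d_inf A \<le> upper_d_inf A" .
  show "upper_d_inf A \<le> ereal (upper_dd A)"
    unfolding ereal_upper_dd upper_d_inf_def
    by (intro INF_greatest SUP_least) (auto intro: upper_d_alpha_le_dens)
qed

end
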